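(* Let $\mathbf u\in W^{1,\varphi}(\Omega,\mathbb{R}^N)$, let $B_\varrho(x_0)\subseteq\Omega$ and $\vartheta\in(0,1)$, and assume $$\frac{\Phi(x_0,\varrho)}{\varphi(|(D\mathbf u)_{x_0,\varrho}|)}\le\frac{\vartheta^n}{2^{\mu_2+1}c_{\mu_2}} .$$ Then $|(D\mathbf u)_{x_0,\varrho}|\le 2\,|(D\mathbf u)_{x_0,\vartheta\varrho}|$.
   Context: $\Omega\subset\mathbb{R}^n$ open bounded, $n,N\ge2$; $B_\varrho(x_0)$ open ball; $(g)_{x_0,\varrho}$ average of $g$ over $B_\varrho(x_0)$. $\varphi:[0,\infty)\to[0,\infty)$ is an $N$-function (convex, $\varphi(0)=0$, right-continuous nondecreasing derivative $\varphi'$, $\varphi'(0)=0$, $\varphi'(t)>0$ for $t>0$, $\varphi'(t)\to\infty$) with $\varphi\in C^1([0,\infty))\cap C^2((0,\infty))$ and $\mu_1-1\le t\varphi''(t)/\varphi'(t)\le\mu_2-1$ for $t>0$, constants $1<\mu_1\le\mu_2$. Shifted $N$-functions: $\varphi_a(t):=\int_0^t\varphi'(a+s)\frac{s}{a+s}\,\mathrm{d}s$ for $a\ge0$ (so $\varphi_0=\varphi$). $c_{\mu_2}$ is a constant (depending only on $\varphi$) such that $\varphi_{|\mathbf a|}(t)\le c_{\mu_2}\varphi_{|\mathbf b|}(t)+2^{-\mu_2-1}\varphi_{|\mathbf a|}(|\mathbf a-\mathbf b|)$ for all $\mathbf a,\mathbf b\in\mathbb{R}^{N\times n}$ and $t\ge0$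 (change-of-shift inequality). Excess: $\Phi(x_0,\varrho):=\frac{1}{|B_\varrho(x_0)|}\int_{B_\varrho(x_0)}\varphi_{|(D\mathbf u)_{x_0,\varrho}|}\big(|D\mathbf u-(D\mathbf u)_{x_0,\varrho}|\big)\,\mathrm{d}x$. *)

theory Defs
  imports "HOL-Analysis.Analysis"
begin

definition N_function_reg ::
  "(real \<Rightarrow> real) \<Rightarrow> (real \<Rightarrow> real) \<Rightarrow> (real \<Rightarrow> real) \<Rightarrow> real \<Rightarrow> real \<Rightarrow> bool" where
  "N_function_reg \<phi> \<phi>' \<phi>'' \<mu>1 \<mu>2 \<longleftrightarrow>
     convex_on {0..} \<phi> \<and> \<phi> 0 = 0 \<and>
     (\<forall>t\<ge>0. (\<phi> has_real_derivative \<phi>' t) (at t within {0..})) \<and>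
     continuous_on {0..} \<phi>' \<and>
     mono_on {0..} \<phi>' \<and> \<phi>' 0 = 0 \<and> (\<forall>t>0. \<phi>' t > 0) \<and>
     filterlim \<phi>' at_top at_top \<and>
     (\<forall>t>0. (\<phi>' has_real_derivative \<phi>'' t) (at t)) \<and>
     continuous_on {0<..} \<phi>'' \<and>
     1 < \<mu>1 \<and> \<mu>1 \<le> \<mu>2 \<and>
     (\<forall>t>0. \<mu>1 - 1 \<le> t * \<phi>'' t / \<phi>' t \<and> t * \<phi>'' t / \<phi>' t \<le> \<mu>2 - 1)"

definition shifted :: "(real \<Rightarrow> real) \<Rightarrow> real \<Rightarrow> real \<Rightarrow> real" where
  "shifted \<phi>' a t = integral {0..t} (\<lambda>s. \<phi>' (a + s) * s / (a + s))"

definition avg :: "('a::euclidean_space \<Rightarrow> 'b::euclidean_space) \<Rightarrow> 'a \<Rightarrow> real \<Rightarrow> 'b" where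
  "avg g x0 r = (LINT x:ball x0 r|lebesgue. g x) /\<^sub>R measure lebesgue (ball x0 r)"

definition pd :: "'n::finite \<Rightarrow> (real^'n \<Rightarrow> real) \<Rightarrow> real^'n \<Rightarrow> real" where
  "pd j f = (\<lambda>x. frechet_derivative f (at x) (axis j 1))"

definition smooth_fun :: "(real^'n::finite \<Rightarrow> real) \<Rightarrow> bool" where
  "smooth_fun f \<longleftrightarrow> (\<forall>js. \<forall>x. foldr pd js f differentiable (at x))"

definition test_fun :: "(real^'n::finite) set \<Rightarrow> (real^'n \<Rightarrow> real) \<Rightarrow> bool" where
  "test_fun \<Omega> \<psi> \<longleftrightarrow> smooth_fun \<psi> \<and> compact (closure {x. \<psi> x \<noteq> 0})
                      \<and> closure {x. \<psi> x \<noteq> 0} \<subseteq> \<Omega>"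

definition weak_gradient ::
  "(real^'n::finite) set \<Rightarrow> (real^'n \<Rightarrow> real^'m::finite) \<Rightarrow> (real^'n \<Rightarrow> real^'n^'m) \<Rightarrow> bool" where
  "weak_gradient \<Omega> u G \<longleftrightarrow>
     (\<forall>K. compact K \<and> K \<subseteq> \<Omega> \<longrightarrow> set_integrable lebesgue K u \<and> set_integrable lebesgue K G) \<and>
     (\<forall>\<psi>. test_fun \<Omega> \<psi> \<longrightarrow> (\<forall>i j.
        (LINT x:\<Omega>|lebesgue. u x $ i * pd j \<psi> x) = - (LINT x:\<Omega>|lebesgue. G x $ i $ j * \<psi> x)))"

definition orlicz :: "(real \<Rightarrow> real) \<Rightarrow> ('a::euclidean_space) set \<Rightarrow> ('a \<Rightarrow> 'b::euclidean_space) \<Rightarrow> bool" where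
  "orlicz \<phi> \<Omega> f \<longleftrightarrow> f \<in> borel_measurable (restrict_space lebesgue \<Omega>) \<and>
     (\<exists>k>0. set_integrable lebesgue \<Omega> (\<lambda>x. \<phi> (norm (f x) / k)))"

definition sobolev_orlicz ::
  "(real \<Rightarrow> real) \<Rightarrow> (real^'n::finite) set \<Rightarrow> (real^'n \<Rightarrow> real^'m::finite) \<Rightarrow> (real^'n \<Rightarrow> real^'n^'m) \<Rightarrow> bool" where
  "sobolev_orlicz \<phi> \<Omega> u Du \<longleftrightarrow> orlicz \<phi> \<Omega> u \<and> weak_gradient \<Omega> u Du \<and> orlicz \<phi> \<Omega> Du"

definition excess ::
  "(real \<Rightarrow> real) \<Rightarrow> (real^'n::finite \<Rightarrow> real^'n^'m::finite) \<Rightarrow> real^'n \<Rightarrow> real \<Rightarrow> real" where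
  "excess \<phi>' Du x0 r = avg (\<lambda>x. shifted \<phi>' (norm (avg Du x0 r)) (norm (Du x - avg Du x0 r))) x0 r"

end

theory Submission
  imports Defs
begin

text \<open>Let \<open>A\<close>, \<open>B\<close> be the means of \<open>Du\<close> over \<open>B\<^sub>\<rho>(x\<^sub>0)\<close> and \<open>B\<^sub>\<theta>\<^sub>\<rho>(x\<^sub>0)\<close>,
  let \<open>a = |A|\<close>, and suppose \<open>a > 2|B|\<close>, so that \<open>|B - A| > a/2\<close>. The shifted function
  \<open>\<phi>\<^sub>a\<close> is convex and increasing, so Jensen's inequality on the small ball and the volume
  ratio \<open>\<theta>^n\<close> of the two balls give \<open>\<theta>^n \<phi>\<^sub>a(a/2) < \<theta>^n \<phi>\<^sub>a(|B - A|) \<le> \<Phi>(x\<^sub>0,\<rho>)\<close>.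
  On the other hand, the change-of-shift inequality for the shifts \<open>0\<close> and \<open>A\<close>, combined with
  the \<open>\<Delta>\<^sub>2\<close> bound \<open>\<phi>(a) \<le> 2^\<mu>\<^sub>2 \<phi>(a/2)\<close>, yields \<open>\<phi>(a) \<le> 2^(\<mu>\<^sub>2+1) c \<phi>\<^sub>a(a/2)\<close>,
  so the smallness hypothesis forces \<open>\<Phi>(x\<^sub>0,\<rho>) \<le> \<theta>^n \<phi>\<^sub>a(a/2)\<close>, a contradiction.\<close>

section \<open>Averages over balls\<close>

lemma measure_ball_pos:
  fixes x :: "'a::euclidean_space"
  shows "0 < r \<Longrightarrow> 0 < measure lebesgue (ball x r)"
  using content_ball_pos by simp

lemma measure_ball_scale:
  fixes x :: "'a::euclidean_space"
  assumes "0 \<le> \<theta>" "0 \<le> r"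
  shows "measure lebesgue (ball x (\<theta> * r)) = \<theta> ^ DIM('a) * measure lebesgue (ball x r)"
  using content_ball_conv_unit_ball[of "\<theta> * r" x] content_ball_conv_unit_ball[of r x] assms
  by (simp add: power_mult_distrib)

lemma set_integral_ball_const:
  fixes c :: "'b::euclidean_space"
  shows "(LINT y:ball x r|lebesgue. c) = measure lebesgue (ball x r) *\<^sub>R c"
  using lmeasurable_ball[of x r] by (intro set_integral_const) (auto simp: fmeasurable_def)

lemma set_integrable_const_fmeasurable:
  fixes c :: "'b::{banach, second_countable_topology}"
  shows "A \<in> fmeasurable M \<Longrightarrow> set_integrable M A (\<lambda>_. c)"
  unfolding set_integrable_def
  by (intro integrable_scaleR_left integrable_real_indicator) (auto simp: fmeasurable_def)

lemma avg_const:
  fixes x :: "'a::euclidean_space" and c :: "'b::euclidean_space"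
  assumes "0 < r"
  shows "avg (\<lambda>_. c) x r = c"
  using measure_ball_pos[OF assms, of x] unfolding avg_def set_integral_ball_const by simp

lemma avg_diff:
  fixes f g :: "'a::euclidean_space \<Rightarrow> 'b::euclidean_space"
  assumes "set_integrable lebesgue (ball x r) f" "set_integrable lebesgue (ball x r) g"
  shows "avg (\<lambda>y. f y - g y) x r = avg f x r - avg g x r"
  unfolding avg_def set_integral_diff(2)[OF assms] by (rule scaleR_diff_right)

lemma avg_mono:
  fixes f g :: "'a::euclidean_space \<Rightarrow> real"
  assumes "set_integrable lebesgue (ball x r) f" "set_integrable lebesgue (ball x r) g"
    and "\<And>y. y \<in> ball x r \<Longrightarrow> f y \<le> g y"
  shows "avg f x r \<le> avg g x r"
  unfolding avg_def using set_integral_mono[OF assms] by (intro scaleR_left_mono) auto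

lemma norm_avg_le:
  fixes g :: "'a::euclidean_space \<Rightarrow> 'b::euclidean_space"
  assumes "set_integrable lebesgue (ball x r) g"
  shows "norm (avg g x r) \<le> avg (\<lambda>y. norm (g y)) x r"
  unfolding avg_def using set_integral_norm_bound[OF assms] by (simp add: mult_left_mono)

lemma avg_affine:
  fixes g :: "'a::euclidean_space \<Rightarrow> real"
  assumes "0 < r" "set_integrable lebesgue (ball x r) g"
  shows "avg (\<lambda>y. c + d * g y) x r = c + d * avg g x r"
proof -
  have "(LINT y:ball x r|lebesgue. c + d * g y)
      = measure lebesgue (ball x r) * c + d * (LINT y:ball x r|lebesgue. g y)"
    using assms(2) set_integrable_const_fmeasurable[OF lmeasurable_ball]
    by (simp add: set_integral_add(2) set_integral_ball_const)
  then show ?thesis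
    using measure_ball_pos[OF assms(1), of x] unfolding avg_def by (simp add: field_simps)
qed

lemma jensen_avg:
  fixes g :: "'a::euclidean_space \<Rightarrow> real" and q :: "real \<Rightarrow> real"
  assumes "0 < r" "set_integrable lebesgue (ball x r) g"
    and "set_integrable lebesgue (ball x r) (\<lambda>y. q (g y))"
    and "\<And>y. y \<in> ball x r \<Longrightarrow> q (avg g x r) + d * (g y - avg g x r) \<le> q (g y)"
  shows "q (avg g x r) \<le> avg (\<lambda>y. q (g y)) x r"
proof -
  let ?c = "avg g x r"
  have "q ?c = avg (\<lambda>y. (q ?c - d * ?c) + d * g y) x r"
    unfolding avg_affine[OF assms(1,2)] by simp
  also have "\<dots> \<le> avg (\<lambda>y. q (g y)) x r"
    using assms by (intro avg_mono) (auto simp: algebra_simps)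
  finally show ?thesis .
qed

lemma set_integral_subset_le:
  fixes g :: "'a \<Rightarrow> real"
  assumes "set_integrable M B g" "A \<in> sets M" "A \<subseteq> B" "\<And>x. x \<in> B \<Longrightarrow> 0 \<le> g x"
  shows "(LINT x:A|M. g x) \<le> (LINT x:B|M. g x)"
  unfolding set_lebesgue_integral_def
proof (rule integral_mono)
  show "integrable M (\<lambda>x. indicator A x *\<^sub>R g x)"
    using set_integrable_subset[OF assms(1-3)] by (simp add: set_integrable_def)
qed (use assms in \<open>auto simp: set_integrable_def indicator_def\<close>)

lemma avg_ball_scale_le:
  fixes g :: "'a::euclidean_space \<Rightarrow> real"
  assumes "0 < \<theta>" "\<theta> \<le> 1" "0 < r" "set_integrable lebesgue (ball x r) g"
    and "\<And>y. y \<in> ball x r \<Longrightarrow> 0 \<le> g y"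
  shows "\<theta> ^ DIM('a) * avg g x (\<theta> * r) \<le> avg g x r"
proof -
  have "ball x (\<theta> * r) \<subseteq> ball x r"
    using assms by (intro subset_ball) (simp add: mult_left_le_one_le)
  then have "(LINT y:ball x (\<theta> * r)|lebesgue. g y) \<le> (LINT y:ball x r|lebesgue. g y)"
    using assms(4,5) by (intro set_integral_subset_le) auto
  moreover have "measure lebesgue (ball x (\<theta> * r)) = \<theta> ^ DIM('a) * measure lebesgue (ball x r)"
    using assms(1,3) by (intro measure_ball_scale) auto
  ultimately show ?thesis
    using measure_ball_pos[OF assms(3), of x] assms(1) unfolding avg_def by (simp add: field_simps)
qed

section \<open>Regular N-functions and their shifts\<close>

locale regular_N_function =
  fixes \<phi> \<phi>' \<phi>'' :: "real \<Rightarrow> real" and \<mu>1 \<mu>2 :: real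
  assumes N_function_reg: "N_function_reg \<phi> \<phi>' \<phi>'' \<mu>1 \<mu>2"
begin

lemma phi_0 [simp]: "\<phi> 0 = 0"
  and phi'_0 [simp]: "\<phi>' 0 = 0"
  and phi'_pos: "t > 0 \<Longrightarrow> \<phi>' t > 0"
  and phi_has_derivative_within: "t \<ge> 0 \<Longrightarrow> (\<phi> has_real_derivative \<phi>' t) (at t within {0..})"
  and continuous_on_phi': "continuous_on {0..} \<phi>'"
  and mono_on_phi': "mono_on {0..} \<phi>'"
  and phi'_has_derivative: "t > 0 \<Longrightarrow> (\<phi>' has_real_derivative \<phi>'' t) (at t)"
  and phi''_index_le: "t > 0 \<Longrightarrow> t * \<phi>'' t / \<phi>' t \<le> \<mu>2 - 1"
  using N_function_reg unfolding N_function_reg_def by blast+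

lemma phi'_nonneg: "t \<ge> 0 \<Longrightarrow> \<phi>' t \<ge> 0"
  using phi'_pos[of t] by (cases "t = 0") simp_all

lemma phi'_mono: "0 \<le> x \<Longrightarrow> x \<le> y \<Longrightarrow> \<phi>' x \<le> \<phi>' y"
  using mono_on_phi' by (auto simp: mono_on_def)

lemma phi_has_derivative:
  assumes "t > 0"
  shows "(\<phi> has_real_derivative \<phi>' t) (at t)"
proof -
  have "(\<phi> has_real_derivative \<phi>' t) (at t within {0<..})"
    using assms by (intro DERIV_subset[OF phi_has_derivative_within]) auto
  then show ?thesis
    using assms at_within_open[of t "{0<..}"] by simp
qed

lemma continuous_on_phi: "continuous_on {0..} \<phi>"
  using phi_has_derivative_within by (intro DERIV_continuous_on) auto

lemma phi_strict_mono:
  assumes "0 \<le> x" "x < y"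
  shows "\<phi> x < \<phi> y"
proof (rule DERIV_pos_imp_increasing_open[OF assms(2)])
  fix z assume "x < z"
  then have "z > 0" using assms(1) by simp
  then show "\<exists>l. (\<phi> has_real_derivative l) (at z) \<and> 0 < l"
    using phi'_pos phi_has_derivative by blast
next
  show "continuous_on {x..y} \<phi>"
    by (rule continuous_on_subset[OF continuous_on_phi]) (use assms(1) in auto)
qed

lemma phi_mono: "0 \<le> x \<Longrightarrow> x \<le> y \<Longrightarrow> \<phi> x \<le> \<phi> y"
  using phi_strict_mono[of x y] by (cases "x = y") auto

lemma phi_nonneg: "t \<ge> 0 \<Longrightarrow> \<phi> t \<ge> 0"
  using phi_mono[of 0 t] by simp

lemma phi_pos: "t > 0 \<Longrightarrow> \<phi> t > 0"
  using phi_strict_mono[of 0 t] by simp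

lemma phi'_double_le:
  assumes "t > 0"
  shows "\<phi>' (2 * t) \<le> 2 powr (\<mu>2 - 1) * \<phi>' t"
proof -
  define g where "g s = ln (\<phi>' s) - (\<mu>2 - 1) * ln s" for s
  have "g (2 * t) \<le> g t"
  proof (rule DERIV_nonpos_imp_decreasing_open[of t "2 * t" g])
    fix x assume "t < x"
    then have x: "x > 0" using assms by simp
    have "(g has_real_derivative \<phi>'' x / \<phi>' x - (\<mu>2 - 1) / x) (at x)"
      unfolding g_def using x phi'_pos[OF x]
      by (auto intro!: derivative_eq_intros phi'_has_derivative)
    moreover have "\<phi>'' x / \<phi>' x \<le> (\<mu>2 - 1) / x"
      using phi''_index_le[OF x] x by (simp add: field_simps)
    ultimately show "\<exists>l. (g has_real_derivative l) (at x) \<and> l \<le> 0"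
      by (intro exI[of _ "\<phi>'' x / \<phi>' x - (\<mu>2 - 1) / x"]) simp
  next
    have "isCont g x" if "x \<in> {t..2 * t}" for x
    proof -
      have x: "x > 0" using that assms by simp
      show ?thesis unfolding g_def using x phi'_pos[OF x]
        by (auto intro!: continuous_intros DERIV_isCont[OF phi'_has_derivative[OF x]])
    qed
    then show "continuous_on {t..2 * t} g" by (simp add: continuous_at_imp_continuous_on)
  qed (use assms in simp)
  then have "ln (\<phi>' (2 * t)) \<le> ln (2 powr (\<mu>2 - 1) * \<phi>' t)"
    unfolding g_def using assms phi'_pos[OF assms] by (simp add: ln_mult ln_powr algebra_simps)
  then show ?thesis
    using assms phi'_pos[of t] phi'_pos[of "2 * t"] by simp
qed

lemma phi_double_le:
  assumes "t \<ge> 0"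
  shows "\<phi> (2 * t) \<le> 2 powr \<mu>2 * \<phi> t"
proof -
  define g where "g s = 2 powr \<mu>2 * \<phi> s - \<phi> (2 * s)" for s
  have "g 0 \<le> g t"
  proof (rule DERIV_nonneg_imp_increasing_open[OF assms])
    fix x :: real assume x: "0 < x"
    have "(g has_real_derivative 2 powr \<mu>2 * \<phi>' x - \<phi>' (2 * x) * 2) (at x)"
      unfolding g_def using x
      by (auto intro!: derivative_eq_intros phi_has_derivative
               DERIV_chain2[of \<phi>, OF phi_has_derivative])
    moreover have "\<phi>' (2 * x) * 2 \<le> 2 powr \<mu>2 * \<phi>' x"
      using phi'_double_le[OF x] by (simp add: powr_diff)
    ultimately show "\<exists>l. (g has_real_derivative l) (at x) \<and> 0 \<le> l"
      by (intro exI[of _ "2 powr \<mu>2 * \<phi>' x - \<phi>' (2 * x) * 2"]) simp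
  next
    have "continuous_on {0..t} (\<lambda>s. \<phi> (2 * s))"
      by (rule continuous_on_compose2[OF continuous_on_phi]) (auto intro!: continuous_intros)
    then show "continuous_on {0..t} g"
      unfolding g_def by (auto intro!: continuous_intros continuous_on_subset[OF continuous_on_phi])
  qed
  then show ?thesis unfolding g_def by simp
qed

lemma phi_le_power2_mult:
  assumes "0 \<le> t" "t \<le> 2 ^ m * s"
  shows "\<phi> t \<le> (2 powr \<mu>2) ^ m * \<phi> s"
  using assms
proof (induction m arbitrary: t)
  case 0
  then show ?case by (simp add: phi_mono)
next
  case (Suc m)
  have "\<phi> t \<le> \<phi> (2 * (t / 2))" by simp
  also have "\<dots> \<le> 2 powr \<mu>2 * \<phi> (t / 2)" using Suc.prems by (intro phi_double_le) simp
  also have "\<dots> \<le> 2 powr \<mu>2 * ((2 powr \<mu>2) ^ m * \<phi> s)"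
    using Suc.prems by (intro mult_left_mono Suc.IH) auto
  finally show ?case by simp
qed

lemma phi_add_le: "0 \<le> s \<Longrightarrow> 0 \<le> t \<Longrightarrow> \<phi> (s + t) \<le> \<phi> (2 * s) + \<phi> (2 * t)"
  using phi_mono[of "s + t" "2 * s"] phi_mono[of "s + t" "2 * t"] phi_nonneg[of "2 * s"]
    phi_nonneg[of "2 * t"]
  by (cases "s \<le> t") auto

lemma shifted_0: "t \<ge> 0 \<Longrightarrow> shifted \<phi>' 0 t = \<phi> t"
proof -
  assume t: "t \<ge> 0"
  have "((\<lambda>s. \<phi>' (0 + s) * s / (0 + s)) has_integral \<phi> t - \<phi> 0) {0..t}"
  proof (rule has_integral_spike_finite[of "{0}"])
    show "(\<phi>' has_integral \<phi> t - \<phi> 0) {0..t}"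
      using t by (intro fundamental_theorem_of_calculus)
        (auto simp: has_real_derivative_iff_has_vector_derivative[symmetric]
              intro: DERIV_subset[OF phi_has_derivative_within])
  qed auto
  then show ?thesis unfolding shifted_def by (simp add: integral_unique)
qed

end

text \<open>The integrand of \<open>shifted \<phi>' a\<close>, extended by zero to negative arguments, so that
  \<open>shifted \<phi>' a\<close> becomes differentiable on an open interval around \<open>0\<close>.\<close>
definition shifted_deriv :: "(real \<Rightarrow> real) \<Rightarrow> real \<Rightarrow> real \<Rightarrow> real" where
  "shifted_deriv \<phi>' a s = \<phi>' (a + max s 0) * (max s 0 / (a + max s 0))"

context regular_N_function
begin

context
  fixes a :: real
  assumes a_pos: "a > 0"
begin

lemma continuous_shifted_deriv: "continuous_on UNIV (shifted_deriv \<phi>' a)"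
proof -
  have "continuous_on UNIV (\<lambda>s. \<phi>' (a + max s 0))"
    using a_pos by (intro continuous_on_compose2[OF continuous_on_phi'] continuous_intros) auto
  moreover have "continuous_on UNIV (\<lambda>s. max s 0 / (a + max s 0))"
    using a_pos by (intro continuous_intros) (auto simp: add_pos_nonneg)
  ultimately show ?thesis unfolding shifted_deriv_def by (rule continuous_on_mult)
qed

lemma shifted_deriv_eq_0: "s \<le> 0 \<Longrightarrow> shifted_deriv \<phi>' a s = 0"
  unfolding shifted_deriv_def by simp

lemma shifted_deriv_pos: "s > 0 \<Longrightarrow> shifted_deriv \<phi>' a s > 0"
  unfolding shifted_deriv_def using a_pos phi'_pos[of "a + s"] by simp

lemma shifted_deriv_mono:
  assumes "s \<le> t"
  shows "shifted_deriv \<phi>' a s \<le> shifted_deriv \<phi>' a t"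
proof -
  define u v where "u = max s 0" and "v = max t 0"
  have uv: "0 \<le> u" "u \<le> v" using assms unfolding u_def v_def by auto
  have "u / (a + u) = 1 - a / (a + u)" "v / (a + v) = 1 - a / (a + v)"
    using a_pos uv by (simp_all add: field_simps)
  moreover have "a / (a + v) \<le> a / (a + u)"
    using a_pos uv by (intro divide_left_mono) auto
  ultimately have "u / (a + u) \<le> v / (a + v)" by simp
  then show ?thesis
    unfolding shifted_deriv_def u_def[symmetric] v_def[symmetric] using a_pos uv
    by (intro mult_mono phi'_mono phi'_nonneg) auto
qed

lemma shifted_deriv_le:
  assumes "s \<ge> 0"
  shows "shifted_deriv \<phi>' a s \<le> \<phi>' (a + s)"
proof -
  have "shifted_deriv \<phi>' a s = \<phi>' (a + s) * (s / (a + s))"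
    unfolding shifted_deriv_def using assms by simp
  also have "\<dots> \<le> \<phi>' (a + s)"
    using assms a_pos by (intro mult_left_le phi'_nonneg) auto
  finally show ?thesis .
qed

lemma shifted_eq_integral: "shifted \<phi>' a t = integral {-1..t} (shifted_deriv \<phi>' a)"
proof (cases "t < 0")
  case True
  then have "integral {-1..t} (shifted_deriv \<phi>' a) = integral {-1..t} (\<lambda>_::real. 0::real)"
    by (intro Henstock_Kurzweil_Integration.integral_cong) (auto simp: shifted_deriv_eq_0)
  then show ?thesis using True by (simp add: shifted_def)
next
  case False
  have "integral {-1..t} (shifted_deriv \<phi>' a)
      = integral {-1..0} (shifted_deriv \<phi>' a) + integral {0..t} (shifted_deriv \<phi>' a)"
    using False integrable_continuous_real[OF continuous_on_subset[OF continuous_shifted_deriv]]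
    by (intro Henstock_Kurzweil_Integration.integral_combine[symmetric]) auto
  moreover have "integral {-1..0} (shifted_deriv \<phi>' a) = integral {-1..0} (\<lambda>_::real. 0::real)"
    by (intro Henstock_Kurzweil_Integration.integral_cong) (auto simp: shifted_deriv_eq_0)
  moreover have "integral {0..t} (shifted_deriv \<phi>' a) = shifted \<phi>' a t"
    unfolding shifted_def shifted_deriv_def
    by (intro Henstock_Kurzweil_Integration.integral_cong) auto
  ultimately show ?thesis by simp
qed

lemma shifted_has_derivative:
  assumes "t > -1"
  shows "(shifted \<phi>' a has_real_derivative shifted_deriv \<phi>' a t) (at t)"
proof -
  have "((\<lambda>x. integral {-1..x} (shifted_deriv \<phi>' a)) has_real_derivative shifted_deriv \<phi>' a t)
      (at t within {-1..t+1})"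
    using assms
    by (intro integral_has_real_derivative continuous_on_subset[OF continuous_shifted_deriv]) auto
  then have "((\<lambda>x. integral {-1..x} (shifted_deriv \<phi>' a)) has_real_derivative shifted_deriv \<phi>' a t)
      (at t)"
    using assms at_within_interior[of t "{-1..t+1}"] by simp
  then show ?thesis
    by (rule has_field_derivative_transform_within_open[where S = "{-1<..}"])
      (use assms shifted_eq_integral in auto)
qed

lemma shifted_eq_0: "t \<le> 0 \<Longrightarrow> shifted \<phi>' a t = 0"
  unfolding shifted_def by (cases "t = 0") auto

lemma shifted_strict_mono:
  assumes "0 \<le> s" "s < t"
  shows "shifted \<phi>' a s < shifted \<phi>' a t"
proof (rule DERIV_pos_imp_increasing_open[OF assms(2)])
  fix x :: real assume "s < x"
  then have "x > 0" using assms(1) by simp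
  then show "\<exists>l. (shifted \<phi>' a has_real_derivative l) (at x) \<and> 0 < l"
    by (intro exI[of _ "shifted_deriv \<phi>' a x"]) (simp add: shifted_has_derivative shifted_deriv_pos)
next
  show "continuous_on {s..t} (shifted \<phi>' a)"
    using assms(1) by (intro continuous_at_imp_continuous_on ballI DERIV_isCont[OF shifted_has_derivative])
      auto
qed

lemma shifted_mono: "s \<le> t \<Longrightarrow> shifted \<phi>' a s \<le> shifted \<phi>' a t"
  using shifted_strict_mono[of s t] shifted_strict_mono[of 0 t] shifted_eq_0[of s] shifted_eq_0[of t]
    shifted_eq_0[of 0]
  by (cases "0 \<le> s"; cases "s = t"; cases "t \<le> 0") auto

lemma shifted_nonneg: "shifted \<phi>' a t \<ge> 0"
  using shifted_mono[of 0 t] shifted_eq_0[of 0] shifted_eq_0[of t] by (cases "t \<ge> 0") auto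

lemma shifted_pos: "t > 0 \<Longrightarrow> shifted \<phi>' a t > 0"
  using shifted_strict_mono[of 0 t] shifted_eq_0[of 0] by simp

lemma shifted_above_tangent:
  assumes "s \<ge> 0" "t \<ge> 0"
  shows "shifted \<phi>' a s + shifted_deriv \<phi>' a s * (t - s) \<le> shifted \<phi>' a t"
proof -
  have "convex_on {-1<..} (shifted \<phi>' a)"
    by (rule convex_on_realI[where f' = "shifted_deriv \<phi>' a"])
      (auto intro: shifted_has_derivative shifted_deriv_mono simp: convex_connected)
  then show ?thesis
    using assms
    by (subst add.commute, subst le_diff_eq[symmetric], intro convex_on_imp_above_tangent)
      (auto simp: interior_open intro!: has_field_derivative_at_within[OF shifted_has_derivative])
qed

lemma shifted_le_phi_add:
  assumes "t \<ge> 0"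
  shows "shifted \<phi>' a t \<le> \<phi> (a + t)"
proof -
  define g where "g s = \<phi> (a + s) - shifted \<phi>' a s" for s
  have deriv: "(g has_real_derivative \<phi>' (a + x) - shifted_deriv \<phi>' a x) (at x)" if "x \<ge> 0" for x
    unfolding g_def using that a_pos
    by (auto intro!: derivative_eq_intros shifted_has_derivative
             DERIV_chain2[of \<phi>, OF phi_has_derivative])
  have "g 0 \<le> g t"
  proof (rule DERIV_nonneg_imp_increasing_open[OF assms])
    fix x :: real assume "0 < x"
    then show "\<exists>l. (g has_real_derivative l) (at x) \<and> 0 \<le> l"
      using deriv[of x] shifted_deriv_le[of x] by (intro exI[of _ "\<phi>' (a + x) - shifted_deriv \<phi>' a x"]) simp
  next
    show "continuous_on {0..t} g"
      using deriv by (intro continuous_at_imp_continuous_on ballI DERIV_isCont) auto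
  qed
  then show ?thesis unfolding g_def using shifted_eq_0[of 0] phi_nonneg[of a] a_pos by simp
qed

lemma borel_measurable_shifted: "shifted \<phi>' a \<in> borel_measurable borel"
  by (rule borel_measurable_mono) (auto simp: mono_def intro: shifted_mono)

end

lemma phi_le_shifted_half:
  fixes A :: "'v::real_normed_vector"
  assumes "A \<noteq> 0"
    and change_of_shift: "\<forall>a b :: 'v. \<forall>t\<ge>0. shifted \<phi>' (norm a) t
          \<le> c * shifted \<phi>' (norm b) t + 2 powr (- \<mu>2 - 1) * shifted \<phi>' (norm a) (norm (a - b))"
  shows "\<phi> (norm A) \<le> 2 powr (\<mu>2 + 1) * c * shifted \<phi>' (norm A) (norm A / 2)"
proof -
  let ?a = "norm A"
  let ?F = "shifted \<phi>' ?a (?a / 2)"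
  have a: "?a > 0" using assms(1) by simp
  have half: "2 powr \<mu>2 * 2 powr (- \<mu>2 - 1) = (1 / 2 :: real)"
    by (simp add: powr_add[symmetric] powr_minus)
  have "\<phi> ?a \<le> 2 powr \<mu>2 * \<phi> (?a / 2)"
    using phi_double_le[of "?a / 2"] by simp
  also have "\<dots> \<le> 2 powr \<mu>2 * (c * ?F + 2 powr (- \<mu>2 - 1) * \<phi> ?a)"
    using change_of_shift[rule_format, of "?a / 2" 0 A] a shifted_0[of ?a] shifted_0[of "?a / 2"]
    by (intro mult_left_mono) auto
  also have "\<dots> = 2 powr \<mu>2 * c * ?F + \<phi> ?a / 2"
    using half by (simp add: algebra_simps)
  finally show ?thesis by (simp add: powr_add)
qed

text \<open>The excess is a Lebesgue integral, which is \<open>0\<close> for non-integrable integrands; this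
  is where the Orlicz integrability of the gradient enters.\<close>
lemma set_integrable_shifted_norm_diff:
  fixes f :: "'a::euclidean_space \<Rightarrow> 'b::euclidean_space"
  assumes "orlicz \<phi> \<Omega> f" "T \<subseteq> \<Omega>" "T \<in> lmeasurable" "A \<noteq> 0"
  shows "set_integrable lebesgue T (\<lambda>x. shifted \<phi>' (norm A) (norm (f x - A)))"
proof -
  let ?a = "norm A"
  have a: "?a > 0" using assms(4) by simp
  obtain k where k: "k > 0" "set_integrable lebesgue \<Omega> (\<lambda>x. \<phi> (norm (f x) / k))"
    and meas: "f \<in> borel_measurable (lebesgue_on \<Omega>)"
    using assms(1) unfolding orlicz_def by auto
  obtain m :: nat where m: "2 * k < 2 ^ m"
    using real_arch_pow[of 2 "2 * k"] by auto
  have T: "T \<in> sets lebesgue" using assms(3) by (rule fmeasurableD)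
  define bound where "bound x = \<phi> (4 * ?a) + (2 powr \<mu>2) ^ m * \<phi> (norm (f x) / k)" for x
  have "set_integrable lebesgue T (\<lambda>_. \<phi> (4 * ?a))"
    by (rule set_integrable_const_fmeasurable[OF assms(3)])
  moreover have "set_integrable lebesgue T (\<lambda>x. \<phi> (norm (f x) / k))"
    by (rule set_integrable_subset[OF k(2) T assms(2)])
  ultimately have bound_integrable: "set_integrable lebesgue T bound"
    unfolding bound_def by (intro set_integral_add set_integrable_mult_right)
  have measurable: "set_borel_measurable lebesgue T (\<lambda>x. shifted \<phi>' ?a (norm (f x - A)))"
  proof -
    have "f \<in> borel_measurable (lebesgue_on T)"
      by (rule measurable_restrict_mono[OF meas assms(2)])
    then have "(\<lambda>x. shifted \<phi>' ?a (norm (f x - A))) \<in> borel_measurable (lebesgue_on T)"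
      by (intro measurable_compose[OF _ borel_measurable_shifted[OF a]]) auto
    then show ?thesis
      unfolding set_borel_measurable_def using T by (simp add: borel_measurable_restrict_space_iff)
  qed
  have le_bound: "shifted \<phi>' ?a (norm (f x - A)) \<le> bound x" for x
  proof -
    have "2 * k * norm (f x) \<le> 2 ^ m * norm (f x)"
      using m by (intro mult_right_mono) auto
    then have "\<phi> (2 * norm (f x)) \<le> (2 powr \<mu>2) ^ m * \<phi> (norm (f x) / k)"
      using k(1) by (intro phi_le_power2_mult) (simp_all add: field_simps)
    have "shifted \<phi>' ?a (norm (f x - A)) \<le> \<phi> (?a + norm (f x - A))"
      using a by (intro shifted_le_phi_add) auto
    also have "\<dots> \<le> \<phi> (2 * ?a + norm (f x))"
      using norm_triangle_ineq4[of "f x" A] by (intro phi_mono) auto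
    also have "\<dots> \<le> \<phi> (4 * ?a) + \<phi> (2 * norm (f x))"
      using phi_add_le[of "2 * ?a" "norm (f x)"] by simp
    finally show ?thesis unfolding bound_def using \<open>\<phi> (2 * norm (f x)) \<le> _\<close> by simp
  qed
  show ?thesis
  proof (rule set_integrable_bound[OF bound_integrable measurable AE_I2], intro impI)
    fix x
    show "norm (shifted \<phi>' ?a (norm (f x - A))) \<le> norm (bound x)"
      using le_bound[of x] shifted_nonneg[OF a, of "norm (f x - A)"] by simp
  qed
qed

end

section \<open>Means of the gradient on concentric balls\<close>

lemma weak_gradient_set_integrable_ball:
  assumes "weak_gradient \<Omega> u Du" "cball x r \<subseteq> \<Omega>"
  shows "set_integrable lebesgue (ball x r) Du"
proof -
  have "set_integrable lebesgue (cball x r) Du"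
    using assms compact_cball unfolding weak_gradient_def by simp
  then show ?thesis by (rule set_integrable_subset) auto
qed

lemma (in regular_N_function) shifted_avg_diff_le_excess:
  fixes Du :: "real^'n \<Rightarrow> real^'n^'m"
  assumes "0 < \<theta>" "\<theta> \<le> 1" "0 < \<rho>" "avg Du x0 \<rho> \<noteq> 0"
    and "set_integrable lebesgue (ball x0 (\<theta> * \<rho>)) Du"
    and "set_integrable lebesgue (ball x0 \<rho>)
           (\<lambda>x. shifted \<phi>' (norm (avg Du x0 \<rho>)) (norm (Du x - avg Du x0 \<rho>)))"
  shows "\<theta> ^ CARD('n) * shifted \<phi>' (norm (avg Du x0 \<rho>)) (norm (avg Du x0 (\<theta> * \<rho>) - avg Du x0 \<rho>))
    \<le> excess \<phi>' Du x0 \<rho>"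
proof -
  define A where "A = avg Du x0 \<rho>"
  define F where "F = shifted \<phi>' (norm A)"
  define r where "r = \<theta> * \<rho>"
  have a: "norm A > 0" using assms(4) by (simp add: A_def)
  have r: "0 < r" "ball x0 r \<subseteq> ball x0 \<rho>"
    using assms(1-3) by (auto simp: r_def intro!: subset_ball mult_left_le_one_le)
  have Du_integrable: "set_integrable lebesgue (ball x0 r) Du"
    using assms(5) by (simp add: r_def)
  note A_integrable = set_integrable_const_fmeasurable[OF lmeasurable_ball, of x0 r A]
  have diff_integrable: "set_integrable lebesgue (ball x0 r) (\<lambda>x. Du x - A)"
    using Du_integrable A_integrable by (rule set_integral_diff(1))
  then have osc_integrable: "set_integrable lebesgue (ball x0 r) (\<lambda>x. norm (Du x - A))"
    by (rule set_integrable_norm)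
  have F_osc_integrable: "set_integrable lebesgue (ball x0 r) (\<lambda>x. F (norm (Du x - A)))"
    using set_integrable_subset[OF assms(6)] r(2) by (simp add: A_def F_def)
  have "avg Du x0 r - A = avg (\<lambda>x. Du x - A) x0 r"
    using avg_diff[OF Du_integrable A_integrable] by (simp add: avg_const[OF r(1)])
  then have osc: "norm (avg Du x0 r - A) \<le> avg (\<lambda>x. norm (Du x - A)) x0 r"
    using norm_avg_le[OF diff_integrable] by simp
  have "F (norm (avg Du x0 r - A)) \<le> F (avg (\<lambda>x. norm (Du x - A)) x0 r)"
    unfolding F_def using a osc by (rule shifted_mono)
  also have "\<dots> \<le> avg (\<lambda>x. F (norm (Du x - A))) x0 r"
    using r(1) osc_integrable F_osc_integrable
  proof (rule jensen_avg)
    fix x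
    show "F (avg (\<lambda>x. norm (Du x - A)) x0 r)
        + shifted_deriv \<phi>' (norm A) (avg (\<lambda>x. norm (Du x - A)) x0 r)
          * (norm (Du x - A) - avg (\<lambda>x. norm (Du x - A)) x0 r)
        \<le> F (norm (Du x - A))"
      unfolding F_def using a order_trans[OF norm_ge_zero osc]
      by (intro shifted_above_tangent) auto
  qed
  finally have "\<theta> ^ CARD('n) * F (norm (avg Du x0 r - A))
      \<le> \<theta> ^ CARD('n) * avg (\<lambda>x. F (norm (Du x - A))) x0 r"
    using assms(1) by simp
  also have "\<dots> \<le> avg (\<lambda>x. F (norm (Du x - A))) x0 \<rho>"
    using avg_ball_scale_le[OF assms(1-3), where g = "\<lambda>x. F (norm (Du x - A))" and x = x0] assms(6)
      shifted_nonneg[OF a]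
    by (simp add: r_def A_def F_def)
  finally show ?thesis
    by (simp add: excess_def A_def F_def r_def)
qed

theorem lemma3p12:
  fixes \<Omega> :: "(real^'n) set" and u :: "real^'n \<Rightarrow> real^'m" and Du :: "real^'n \<Rightarrow> real^'n^'m"
    and \<phi> \<phi>' \<phi>'' :: "real \<Rightarrow> real" and \<mu>1 \<mu>2 c\<mu>2 \<theta> \<rho> :: real and x0 :: "real^'n"
  assumes "CARD('n) \<ge> 2" and "CARD('m) \<ge> 2"
    and "open \<Omega>" and "bounded \<Omega>"
    and "N_function_reg \<phi> \<phi>' \<phi>'' \<mu>1 \<mu>2"
    and "\<forall>a b :: real^'n^'m. \<forall>t\<ge>0. shifted \<phi>' (norm a) t
            \<le> c\<mu>2 * shifted \<phi>' (norm b) t + 2 powr (- \<mu>2 - 1) * shifted \<phi>' (norm a) (norm (a - b))"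
    and "sobolev_orlicz \<phi> \<Omega> u Du"
    and "\<rho> > 0" and "ball x0 \<rho> \<subseteq> \<Omega>"
    and "0 < \<theta>" and "\<theta> < 1"
    and "excess \<phi>' Du x0 \<rho> / \<phi> (norm (avg Du x0 \<rho>)) \<le> \<theta> ^ CARD('n) / (2 powr (\<mu>2 + 1) * c\<mu>2)"
  shows "norm (avg Du x0 \<rho>) \<le> 2 * norm (avg Du x0 (\<theta> * \<rho>))"
proof (rule ccontr)
  interpret regular_N_function \<phi> \<phi>' \<phi>'' \<mu>1 \<mu>2
    by unfold_locales (rule assms(5))
  define A B where "A = avg Du x0 \<rho>" and "B = avg Du x0 (\<theta> * \<rho>)"
  define a F where "a = norm A" and "F = shifted \<phi>' a"
  assume "\<not> norm (avg Du x0 \<rho>) \<le> 2 * norm B"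
  then have far: "a / 2 < norm (B - A)" and a: "a > 0" "A \<noteq> 0"
    using norm_triangle_ineq2[of A B] norm_minus_commute[of A B] norm_ge_zero[of B]
    by (auto simp: A_def B_def a_def)
  have Du_integrable: "set_integrable lebesgue (ball x0 (\<theta> * \<rho>)) Du"
    using assms(7) order_trans[OF _ assms(9), of "cball x0 (\<theta> * \<rho>)"] assms(8,10,11)
    by (intro weak_gradient_set_integrable_ball[of \<Omega> u])
      (simp_all add: sobolev_orlicz_def cball_subset_ball_iff)
  have F_integrable: "set_integrable lebesgue (ball x0 \<rho>) (\<lambda>x. F (norm (Du x - A)))"
    using assms(7) unfolding sobolev_orlicz_def F_def a_def
    by (intro set_integrable_shifted_norm_diff[OF _ assms(9) lmeasurable_ball a(2)]) simp
  have phi_a: "\<phi> a \<le> 2 powr (\<mu>2 + 1) * c\<mu>2 * F (a / 2)" "0 < \<phi> a" "0 < F (a / 2)"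
    using phi_le_shifted_half[OF a(2) assms(6)] phi_pos[OF a(1)] shifted_pos[OF a(1)] a(1)
    by (simp_all add: F_def a_def)
  then have "0 < 2 powr (\<mu>2 + 1) * c\<mu>2"
    by (smt (verit) zero_less_mult_iff)
  then have "excess \<phi>' Du x0 \<rho> \<le> \<theta> ^ CARD('n) * (\<phi> a / (2 powr (\<mu>2 + 1) * c\<mu>2))"
    using assms(12) phi_a(2) by (simp add: A_def a_def pos_divide_le_eq)
  also have "\<dots> \<le> \<theta> ^ CARD('n) * F (a / 2)"
    using phi_a(1) \<open>0 < 2 powr (\<mu>2 + 1) * c\<mu>2\<close> assms(10)
    by (intro mult_left_mono) (simp_all add: pos_divide_le_eq mult.commute)
  also have "\<dots> < \<theta> ^ CARD('n) * F (norm (B - A))"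
    using far a(1) assms(10) by (simp add: F_def shifted_strict_mono)
  also have "\<dots> \<le> excess \<phi>' Du x0 \<rho>"
    using shifted_avg_diff_le_excess[OF assms(10) _ assms(8) a(2)[unfolded A_def]]
      Du_integrable F_integrable assms(11)
    by (simp add: A_def B_def F_def a_def)
  finally show False by simp
qed

end
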